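(* In the standing setup with duals, the element $\check 1_e\in\check A_e$ is invariant under the dual action $\check\varphi$ of $G$ if and only if $\sigma(h)(\sigma(j)+1)\equiv 0\pmod 2$ for all $h\in G$ (equivalently, if and only if $GM_f$ is $G$-Euler in the sense that $\varphi(h^{-1}j)|_{A_h}=\exp(2\pi i\mathcal{Q})|_{A_h}$ for all $h$).
   Context: Standing setup. Let $f\in\mathbb{C}[z_1,\dots,z_n]$ be quasi-homogeneous with isolated singularity at $0$ and weights $q_i\in(0,1)$; $M_f$ is its Milnor ring graded by $\deg z_i=q_i$, and $d=\sum_i(1-2q_i)$. $G$ is a finite abelian group with diagonal representation $\rho$ leaving $f$ invariant, $\rho(g)=\mathrm{diag}(e^{2\pi i\nu_i(g)})$, $\nu_i(g)\in[0,1)$; $\mathrm{Fix}(g)$ is spanned by the $z_i$ with $\nu_i(g)=0$; $A_g=M_{f|_{\mathrm{Fix}(g)}}$ (equal to $\mathbb{C}$ if $\mathrm{Fix}(g)=0$) with elements $a1_g$; $GM_f=\bigoplus_gA_g$. Fix $\sigma\in\mathrm{Hom}(G,\mathbb{Z}/2\mathbb{Z})$; action $\varphi(h)(a1_g)=(-1)^{\sigma(h)\sigma(g)}\det(\rho(h))^{-1}\det(\rho(h)|_{\mathrm{Fix}(g)})\,a(\rho(h)z)\,1_g$; character $\chi(h)=(-1)^{\sigma(h)}\det\rho(h)$. Assume $j\in G$ with $\rho(j)=\mathrm{diag}(e^{2\pi iq_1},\dots,e^{2\pi iq_n})$. Dual: $\check A_g:=A_{gj^{-1}}$, $\check{GM_f}=\bigoplus_g\check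 A_g$; write $a\check1_g$ for the element $a1_{gj^{-1}}$ regarded in $\check A_g$; dual action $\check\varphi(h)(a\check1_g)=\chi(h)\cdot(\varphi(h)(a1_{gj^{-1}}))$ regarded in $\check A_g$. Shift $s_g=\sum_{i:\nu_i(g)\neq 0}(\nu_i(g)-q_i)$, $\mathcal{Q}(a1_h)=(\deg a+s_h)a1_h$. *)

theory Defs
  imports "HOL-Library.Poly_Mapping" "HOL-Algebra.Group" Complex_Main
begin

text \<open>Polynomials in the variables z_0, z_1, ... with complex coefficients:
  a monomial is an exponent vector (nat with finite support), a polynomial a
  finitely supported map from monomials to coefficients.\<close>
type_synonym mpoly = "(nat \<Rightarrow>\<^sub>0 nat) \<Rightarrow>\<^sub>0 complex"

definition cconst :: "complex \<Rightarrow> mpoly" where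
  "cconst c = Poly_Mapping.single 0 c"

definition mon_weight :: "(nat \<Rightarrow> real) \<Rightarrow> (nat \<Rightarrow>\<^sub>0 nat) \<Rightarrow> real" where
  "mon_weight w \<alpha> = (\<Sum>i\<in>Poly_Mapping.keys \<alpha>. w i * real (Poly_Mapping.lookup \<alpha> i))"

definition vars_in :: "nat set \<Rightarrow> mpoly \<Rightarrow> bool" where
  "vars_in S p \<longleftrightarrow> (\<forall>\<alpha>\<in>Poly_Mapping.keys p. Poly_Mapping.keys \<alpha> \<subseteq> S)"

definition quasi_homogeneous :: "nat \<Rightarrow> (nat \<Rightarrow> real) \<Rightarrow> mpoly \<Rightarrow> bool" where
  "quasi_homogeneous n q f \<longleftrightarrow> vars_in {..<n} f \<and> (\<forall>\<alpha>\<in>Poly_Mapping.keys f. mon_weight q \<alpha> = 1)"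

definition pderiv_mp :: "nat \<Rightarrow> mpoly \<Rightarrow> mpoly" where
  "pderiv_mp k p = (\<Sum>\<alpha>\<in>Poly_Mapping.keys p.
      Poly_Mapping.single (\<alpha> - Poly_Mapping.single k 1) (of_nat (Poly_Mapping.lookup \<alpha> k) * Poly_Mapping.lookup p \<alpha>))"

definition eval_mp :: "mpoly \<Rightarrow> (nat \<Rightarrow> complex) \<Rightarrow> complex" where
  "eval_mp p z = (\<Sum>\<alpha>\<in>Poly_Mapping.keys p. Poly_Mapping.lookup p \<alpha> * (\<Prod>i\<in>Poly_Mapping.keys \<alpha>. z i ^ Poly_Mapping.lookup \<alpha> i))"

definition isolated_singularity :: "nat \<Rightarrow> mpoly \<Rightarrow> bool" where
  "isolated_singularity n f \<longleftrightarrow>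
     (\<exists>\<epsilon>>0. \<forall>z. (\<forall>i<n. cmod (z i) < \<epsilon>) \<and> (\<forall>k<n. eval_mp (pderiv_mp k f) z = 0)
                 \<longrightarrow> (\<forall>i<n. z i = 0))"

definition restrict_mp :: "nat set \<Rightarrow> mpoly \<Rightarrow> mpoly" where
  "restrict_mp S p = (\<Sum>\<alpha>\<in>Poly_Mapping.keys p. if Poly_Mapping.keys \<alpha> \<subseteq> S then Poly_Mapping.single \<alpha> (Poly_Mapping.lookup p \<alpha>) else 0)"

definition in_jacobian_ideal :: "nat set \<Rightarrow> mpoly \<Rightarrow> mpoly \<Rightarrow> bool" where
  "in_jacobian_ideal S f a \<longleftrightarrow> vars_in S a \<and>
     (\<exists>c. (\<forall>k\<in>S. vars_in S (c k)) \<and> a = (\<Sum>k\<in>S. c k * pderiv_mp k (restrict_mp S f)))"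

text \<open>Equality in the Milnor ring M_{f|_S} (= C if S is empty) of representatives
  a, b in C[z_i : i in S].\<close>
definition milnor_eq :: "nat set \<Rightarrow> mpoly \<Rightarrow> mpoly \<Rightarrow> mpoly \<Rightarrow> bool" where
  "milnor_eq S f a b \<longleftrightarrow> in_jacobian_ideal S f (a - b)"

text \<open>Diagonal representation rho(g) = diag(exp(2 pi i nu_i(g))), nu_i(g) in [0,1).\<close>
definition eig :: "('g \<Rightarrow> nat \<Rightarrow> real) \<Rightarrow> 'g \<Rightarrow> nat \<Rightarrow> complex" where
  "eig \<nu> g i = cis (2 * pi * \<nu> g i)"

definition diag_rep :: "('g, 'b) monoid_scheme \<Rightarrow> nat \<Rightarrow> ('g \<Rightarrow> nat \<Rightarrow> real) \<Rightarrow> bool" where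
  "diag_rep G n \<nu> \<longleftrightarrow>
     (\<forall>g\<in>carrier G. \<forall>i<n. 0 \<le> \<nu> g i \<and> \<nu> g i < 1) \<and>
     (\<forall>g\<in>carrier G. \<forall>h\<in>carrier G. \<forall>i<n. \<nu> (g \<otimes>\<^bsub>G\<^esub> h) i = frac (\<nu> g i + \<nu> h i))"

definition Fix :: "nat \<Rightarrow> ('g \<Rightarrow> nat \<Rightarrow> real) \<Rightarrow> 'g \<Rightarrow> nat set" where
  "Fix n \<nu> g = {i. i < n \<and> \<nu> g i = 0}"

text \<open>a(rho(h) z)\<close>
definition act_mp :: "('g \<Rightarrow> nat \<Rightarrow> real) \<Rightarrow> 'g \<Rightarrow> mpoly \<Rightarrow> mpoly" where
  "act_mp \<nu> h p = (\<Sum>\<alpha>\<in>Poly_Mapping.keys p.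
      Poly_Mapping.single \<alpha> (Poly_Mapping.lookup p \<alpha> * (\<Prod>i\<in>Poly_Mapping.keys \<alpha>. eig \<nu> h i ^ Poly_Mapping.lookup \<alpha> i)))"

definition det_rho :: "nat \<Rightarrow> ('g \<Rightarrow> nat \<Rightarrow> real) \<Rightarrow> 'g \<Rightarrow> complex" where
  "det_rho n \<nu> h = (\<Prod>i<n. eig \<nu> h i)"

definition det_rho_fix :: "nat \<Rightarrow> ('g \<Rightarrow> nat \<Rightarrow> real) \<Rightarrow> 'g \<Rightarrow> 'g \<Rightarrow> complex" where
  "det_rho_fix n \<nu> h g = (\<Prod>i\<in>Fix n \<nu> g. eig \<nu> h i)"

definition hom_Z2 :: "('g, 'b) monoid_scheme \<Rightarrow> ('g \<Rightarrow> nat) \<Rightarrow> bool" where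
  "hom_Z2 G \<sigma> \<longleftrightarrow> (\<forall>g\<in>carrier G. \<sigma> g \<in> {0, 1}) \<and>
     (\<forall>g\<in>carrier G. \<forall>h\<in>carrier G. \<sigma> (g \<otimes>\<^bsub>G\<^esub> h) = (\<sigma> g + \<sigma> h) mod 2)"

text \<open>phi(h)(a 1_g), the result being a representative of an element of A_g.\<close>
definition phi :: "nat \<Rightarrow> ('g \<Rightarrow> nat \<Rightarrow> real) \<Rightarrow> ('g \<Rightarrow> nat) \<Rightarrow> 'g \<Rightarrow> 'g \<Rightarrow> mpoly \<Rightarrow> mpoly" where
  "phi n \<nu> \<sigma> h g a = cconst ((-1) ^ (\<sigma> h * \<sigma> g) * inverse (det_rho n \<nu> h) * det_rho_fix n \<nu> h g)
                       * act_mp \<nu> h a"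

definition chi :: "nat \<Rightarrow> ('g \<Rightarrow> nat \<Rightarrow> real) \<Rightarrow> ('g \<Rightarrow> nat) \<Rightarrow> 'g \<Rightarrow> complex" where
  "chi n \<nu> \<sigma> h = (-1) ^ \<sigma> h * det_rho n \<nu> h"

text \<open>Dual action: check-phi(h)(a check-1_g) = chi(h) phi(h)(a 1_{g j^-1}),
  a representative of an element of check-A_g = A_{g j^-1}.\<close>
definition dual_phi :: "('g, 'b) monoid_scheme \<Rightarrow> nat \<Rightarrow> ('g \<Rightarrow> nat \<Rightarrow> real) \<Rightarrow> ('g \<Rightarrow> nat)
                        \<Rightarrow> 'g \<Rightarrow> 'g \<Rightarrow> 'g \<Rightarrow> mpoly \<Rightarrow> mpoly" where
  "dual_phi G n \<nu> \<sigma> j h g a = cconst (chi n \<nu> \<sigma> h) * phi n \<nu> \<sigma> h (g \<otimes>\<^bsub>G\<^esub> inv\<^bsub>G\<^esub> j) a"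

definition dual_unit_invariant :: "('g, 'b) monoid_scheme \<Rightarrow> nat \<Rightarrow> mpoly \<Rightarrow> ('g \<Rightarrow> nat \<Rightarrow> real)
                                   \<Rightarrow> ('g \<Rightarrow> nat) \<Rightarrow> 'g \<Rightarrow> bool" where
  "dual_unit_invariant G n f \<nu> \<sigma> j \<longleftrightarrow>
     (\<forall>h\<in>carrier G. milnor_eq (Fix n \<nu> (\<one>\<^bsub>G\<^esub> \<otimes>\<^bsub>G\<^esub> inv\<^bsub>G\<^esub> j)) f
                        (dual_phi G n \<nu> \<sigma> j h \<one>\<^bsub>G\<^esub> 1) 1)"

text \<open>Shift s_g and exp(2 pi i Q) on A_g (extended linearly from quasi-homogeneous elements).\<close>
definition shift :: "nat \<Rightarrow> (nat \<Rightarrow> real) \<Rightarrow> ('g \<Rightarrow> nat \<Rightarrow> real) \<Rightarrow> 'g \<Rightarrow> real" where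
  "shift n q \<nu> g = (\<Sum>i\<in>{i. i < n \<and> \<nu> g i \<noteq> 0}. \<nu> g i - q i)"

definition expQ :: "nat \<Rightarrow> (nat \<Rightarrow> real) \<Rightarrow> ('g \<Rightarrow> nat \<Rightarrow> real) \<Rightarrow> 'g \<Rightarrow> mpoly \<Rightarrow> mpoly" where
  "expQ n q \<nu> g a = (\<Sum>\<alpha>\<in>Poly_Mapping.keys a.
      Poly_Mapping.single \<alpha> (Poly_Mapping.lookup a \<alpha> * cis (2 * pi * (mon_weight q \<alpha> + shift n q \<nu> g))))"

definition G_Euler :: "('g, 'b) monoid_scheme \<Rightarrow> nat \<Rightarrow> (nat \<Rightarrow> real) \<Rightarrow> mpoly \<Rightarrow> ('g \<Rightarrow> nat \<Rightarrow> real)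
                       \<Rightarrow> ('g \<Rightarrow> nat) \<Rightarrow> 'g \<Rightarrow> bool" where
  "G_Euler G n q f \<nu> \<sigma> j \<longleftrightarrow>
     (\<forall>h\<in>carrier G. \<forall>a. vars_in (Fix n \<nu> h) a \<longrightarrow>
        milnor_eq (Fix n \<nu> h) f (phi n \<nu> \<sigma> (inv\<^bsub>G\<^esub> h \<otimes>\<^bsub>G\<^esub> j) h a) (expQ n q \<nu> h a))"

end

(* The twist j^-1 fixes no coordinate because all q_i > 0, so the dual unit lives in
   A_{j^-1} = C, where the dual action of h is chi(h) times the scalar by which phi(h) acts
   on 1_{j^-1}: the determinants cancel and (-1)^(sigma(h) (sigma(j) + 1)) remains.
   The diagonal entries of rho(h^-1 j) are exp(2 pi i (q_i - nu_i(h))). On Fix(h) they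
   multiply a monomial of weight w by exp(2 pi i w), while the determinant factor of phi
   contributes exp(2 pi i s_h); hence phi(h^-1 j) = (-1)^(sigma(h^-1 j) sigma(h)) exp(2 pi i Q)
   on A_h, and this sign has the same parity as before. The sign -1 is impossible in A_h:
   as all q_i < 1, f has no linear terms, so the Jacobian ideal contains no nonzero constant. *)

theory Submission
  imports Defs
begin

lemma cis_frac: "cis (2 * pi * frac x) = cis (2 * pi * x)"
proof -
  have "cis (2 * pi * x) = cis (2 * pi * frac x) * cis (2 * pi * of_int \<lfloor>x\<rfloor>)"
    by (simp add: cis_mult frac_def algebra_simps)
  then show ?thesis by simp
qed

lemma cis_sum: "finite A \<Longrightarrow> cis (\<Sum>i\<in>A. f i) = (\<Prod>i\<in>A. cis (f i))"
  by (induction A rule: finite_induct) (auto simp: cis_mult[symmetric])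

lemma cconst_mult: "cconst a * cconst b = cconst (a * b)"
  by (simp add: cconst_def mult_single)

lemma cconst_eq_1_iff: "cconst a = 1 \<longleftrightarrow> a = 1"
proof
  assume "cconst a = 1"
  then have "Poly_Mapping.lookup (cconst a) 0 = Poly_Mapping.lookup 1 0" by simp
  then show "a = 1" by (simp add: cconst_def)
qed (simp add: cconst_def)

lemma cconst_mult_sum_single:
  "cconst c * (\<Sum>\<alpha>\<in>A. Poly_Mapping.single \<alpha> (x \<alpha>))
     = (\<Sum>\<alpha>\<in>A. Poly_Mapping.single \<alpha> (c * x \<alpha>))"
  by (simp add: cconst_def sum_distrib_left mult_single)

lemma lookup_restrict_mp:
  "Poly_Mapping.lookup (restrict_mp S p) \<beta> =
     (if Poly_Mapping.keys \<beta> \<subseteq> S then Poly_Mapping.lookup p \<beta> else 0)"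
proof -
  have "Poly_Mapping.lookup (restrict_mp S p) \<beta> =
      (\<Sum>\<alpha>\<in>Poly_Mapping.keys p.
         if \<alpha> = \<beta> then (if Poly_Mapping.keys \<beta> \<subseteq> S then Poly_Mapping.lookup p \<beta> else 0) else 0)"
    unfolding restrict_mp_def lookup_sum
    by (intro sum.cong) (auto simp: lookup_single when_def)
  then show ?thesis by (simp add: sum.delta' in_keys_iff)
qed

lemma lookup_pderiv_mp_0:
  "Poly_Mapping.lookup (pderiv_mp k p) 0 = Poly_Mapping.lookup p (Poly_Mapping.single k 1)"
proof -
  have "(of_nat (Poly_Mapping.lookup \<alpha> k) * Poly_Mapping.lookup p \<alpha> when \<alpha> - Poly_Mapping.single k 1 = 0)
      = (if \<alpha> = Poly_Mapping.single k 1 then Poly_Mapping.lookup p \<alpha> else 0)" for \<alpha>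
  proof (cases "\<alpha> - Poly_Mapping.single k 1 = 0 \<and> Poly_Mapping.lookup \<alpha> k \<noteq> 0")
    case True
    then have le: "Poly_Mapping.lookup \<alpha> i - Poly_Mapping.lookup (Poly_Mapping.single k 1) i = 0" for i
      by (metis lookup_minus lookup_zero)
    have "\<alpha> = Poly_Mapping.single k 1"
    proof (rule poly_mapping_eqI)
      fix i show "Poly_Mapping.lookup \<alpha> i = Poly_Mapping.lookup (Poly_Mapping.single k 1) i"
        using le[of i] True by (cases "i = k") (auto simp: lookup_single)
    qed
    then show ?thesis by simp
  qed (auto simp: when_def lookup_minus)
  then show ?thesis
    by (simp add: pderiv_mp_def lookup_sum lookup_single sum.delta' in_keys_iff)
qed

lemma lookup_mult_0_eq_0:
  fixes c p :: "('a \<Rightarrow>\<^sub>0 nat) \<Rightarrow>\<^sub>0 'b::semiring_0"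
  assumes "Poly_Mapping.lookup p 0 = 0"
  shows "Poly_Mapping.lookup (c * p) 0 = 0"
proof -
  have "0 \<notin> Poly_Mapping.keys (c * p)"
  proof
    assume "0 \<in> Poly_Mapping.keys (c * p)"
    then obtain a b where "b \<in> Poly_Mapping.keys p" "a + b = 0"
      using keys_mult by fastforce
    moreover from \<open>a + b = 0\<close> have "b = 0"
      by (metis add_eq_0_iff_both_eq_0 lookup_add lookup_zero poly_mapping_eqI)
    ultimately show False
      using assms by (simp add: in_keys_iff)
  qed
  then show ?thesis by (simp add: in_keys_iff)
qed

lemma quasi_homogeneous_no_linear_terms:
  assumes "quasi_homogeneous n q f" and "\<forall>i<n. q i < 1"
  shows "Poly_Mapping.lookup f (Poly_Mapping.single k 1) = 0"
proof (rule ccontr)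
  assume "Poly_Mapping.lookup f (Poly_Mapping.single k 1) \<noteq> 0"
  then have "Poly_Mapping.single k 1 \<in> Poly_Mapping.keys f" by (simp add: in_keys_iff)
  then have "k < n" "q k = 1"
    using assms(1) by (auto simp: quasi_homogeneous_def vars_in_def mon_weight_def)
  then show False using assms(2) by auto
qed

lemma in_jacobian_ideal_lookup_0:
  assumes "quasi_homogeneous n q f" and "\<forall>i<n. q i < 1" and "in_jacobian_ideal S f a"
  shows "Poly_Mapping.lookup a 0 = 0"
proof -
  obtain c where "a = (\<Sum>k\<in>S. c k * pderiv_mp k (restrict_mp S f))"
    using assms(3) by (auto simp: in_jacobian_ideal_def)
  moreover have "Poly_Mapping.lookup (pderiv_mp k (restrict_mp S f)) 0 = 0" for k
    using quasi_homogeneous_no_linear_terms[OF assms(1,2)]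
    by (simp add: lookup_pderiv_mp_0 lookup_restrict_mp)
  ultimately show ?thesis
    by (simp add: lookup_sum lookup_mult_0_eq_0)
qed

lemma milnor_eq_refl: "milnor_eq S f a a"
  unfolding milnor_eq_def in_jacobian_ideal_def vars_in_def
  by (auto intro!: exI[of _ "\<lambda>_. 0"])

lemma milnor_eq_empty_iff: "milnor_eq {} f a b \<longleftrightarrow> a = b"
  unfolding milnor_eq_def in_jacobian_ideal_def vars_in_def by auto

lemma expQ_1: "expQ n q \<nu> g 1 = cconst (cis (2 * pi * shift n q \<nu> g))"
  by (simp add: expQ_def mon_weight_def cconst_def)

text \<open>Testing on the unit 1 suffices: a nonzero constant never lies in the Jacobian ideal.\<close>
lemma milnor_eq_scaled_expQ_iff:
  assumes "quasi_homogeneous n q f" and "\<forall>i<n. q i < 1"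
  shows "(\<forall>a. vars_in S a \<longrightarrow> milnor_eq S f (cconst c * expQ n q \<nu> h a) (expQ n q \<nu> h a))
     \<longleftrightarrow> c = 1"
proof
  assume "\<forall>a. vars_in S a \<longrightarrow> milnor_eq S f (cconst c * expQ n q \<nu> h a) (expQ n q \<nu> h a)"
  then have "in_jacobian_ideal S f (cconst c * expQ n q \<nu> h 1 - expQ n q \<nu> h 1)"
    by (auto simp: vars_in_def milnor_eq_def)
  from in_jacobian_ideal_lookup_0[OF assms this]
  have "(c - 1) * cis (2 * pi * shift n q \<nu> h) = 0"
    by (simp add: expQ_1 cconst_mult lookup_minus) (simp add: cconst_def algebra_simps)
  then show "c = 1" by simp
qed (simp add: cconst_def milnor_eq_refl)

lemma (in group) hom_Z2_one:
  assumes "hom_Z2 G \<sigma>"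
  shows "\<sigma> \<one> = 0"
  using assms by (auto simp: hom_Z2_def dest!: bspec[of _ _ \<one>])

lemma (in group) hom_Z2_inv:
  assumes "hom_Z2 G \<sigma>" and "g \<in> carrier G"
  shows "\<sigma> (inv g) = \<sigma> g"
proof -
  have "\<sigma> (inv g \<otimes> g) = (\<sigma> (inv g) + \<sigma> g) mod 2"
    using assms inv_closed unfolding hom_Z2_def by blast
  then have "\<sigma> \<one> = (\<sigma> (inv g) + \<sigma> g) mod 2"
    using assms(2) by simp
  moreover have "\<sigma> (inv g) \<in> {0, 1}" "\<sigma> g \<in> {0, 1}"
    using assms by (auto simp: hom_Z2_def)
  ultimately show ?thesis
    using hom_Z2_one[OF assms(1)] by auto
qed

lemma (in group) hom_Z2_sign_inv_mult:
  assumes "hom_Z2 G \<sigma>" and "g \<in> carrier G" and "h \<in> carrier G"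
  shows "(-1::complex) ^ (\<sigma> (inv h \<otimes> g) * \<sigma> h) = (-1) ^ (\<sigma> h * (\<sigma> g + 1))"
proof -
  have "\<sigma> (inv h \<otimes> g) = (\<sigma> h + \<sigma> g) mod 2"
    using assms hom_Z2_inv[OF assms(1,3)] by (simp add: hom_Z2_def)
  moreover have "\<sigma> g \<in> {0, 1}" "\<sigma> h \<in> {0, 1}"
    using assms by (auto simp: hom_Z2_def)
  ultimately show ?thesis by auto
qed

locale diagonal_rep = group G for G (structure) +
  fixes n :: nat and \<nu> :: "'a \<Rightarrow> nat \<Rightarrow> real"
  assumes diag_rep: "diag_rep G n \<nu>"
begin

lemma nu_range: "g \<in> carrier G \<Longrightarrow> i < n \<Longrightarrow> 0 \<le> \<nu> g i \<and> \<nu> g i < 1"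
  using diag_rep by (simp add: diag_rep_def)

lemma nu_mult:
  "g \<in> carrier G \<Longrightarrow> h \<in> carrier G \<Longrightarrow> i < n \<Longrightarrow> \<nu> (g \<otimes> h) i = frac (\<nu> g i + \<nu> h i)"
  using diag_rep by (simp add: diag_rep_def)

lemma nu_one:
  assumes "i < n"
  shows "\<nu> \<one> i = 0"
proof -
  from assms have "\<nu> \<one> i = frac (\<nu> \<one> i + \<nu> \<one> i)" and r: "0 \<le> \<nu> \<one> i" "\<nu> \<one> i < 1"
    using nu_mult[of \<one> \<one> i] nu_range[of \<one> i] by auto
  then have "\<nu> \<one> i = of_int \<lfloor>\<nu> \<one> i + \<nu> \<one> i\<rfloor>"
    by (simp add: frac_def)
  then obtain k :: int where "\<nu> \<one> i = of_int k" by blast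
  with r show ?thesis by simp
qed

lemma nu_eq_0_if_inv_eq_0:
  assumes "g \<in> carrier G" and "i < n" and "\<nu> (inv g) i = 0"
  shows "\<nu> g i = 0"
proof -
  have "0 = frac (\<nu> (inv g) i + \<nu> g i)"
    using nu_mult[of "inv g" g i] nu_one assms by simp
  also have "\<dots> = \<nu> g i"
    using assms nu_range[of g i] by (simp add: frac_eq)
  finally show ?thesis by simp
qed

lemma Fix_inv: "g \<in> carrier G \<Longrightarrow> Fix n \<nu> (inv g) = Fix n \<nu> g"
  unfolding Fix_def using nu_eq_0_if_inv_eq_0[of g] nu_eq_0_if_inv_eq_0[of "inv g"] by auto

lemma eig_mult:
  "g \<in> carrier G \<Longrightarrow> h \<in> carrier G \<Longrightarrow> i < n \<Longrightarrow> eig \<nu> (g \<otimes> h) i = eig \<nu> g i * eig \<nu> h i"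
  by (simp add: nu_mult eig_def cis_frac cis_mult distrib_left)

lemma eig_inv_mult:
  assumes "g \<in> carrier G" and "h \<in> carrier G" and "i < n"
  shows "eig \<nu> (inv h \<otimes> g) i = cis (2 * pi * (\<nu> g i - \<nu> h i))"
proof -
  have "eig \<nu> (inv h) i * eig \<nu> h i = 1"
    using eig_mult[of "inv h" h i] assms by (simp add: nu_one eig_def)
  then have "eig \<nu> (inv h) i = inverse (eig \<nu> h i)"
    using inverse_unique[of "eig \<nu> h i" "eig \<nu> (inv h) i"] by (simp add: mult.commute)
  then show ?thesis
    using eig_mult[of "inv h" g i] assms by (simp add: eig_def cis_mult right_diff_distrib)
qed

context
  fixes q :: "nat \<Rightarrow> real" and j :: 'a
  assumes j_carrier: "j \<in> carrier G" and nu_j: "\<forall>i<n. \<nu> j i = q i"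
begin

lemma eig_inv_mult_j:
  "h \<in> carrier G \<Longrightarrow> i < n \<Longrightarrow> eig \<nu> (inv h \<otimes> j) i = cis (2 * pi * (q i - \<nu> h i))"
  using eig_inv_mult[OF j_carrier] nu_j by simp

lemma det_rho_fix_div_det_rho:
  assumes "h \<in> carrier G"
  shows "inverse (det_rho n \<nu> (inv h \<otimes> j)) * det_rho_fix n \<nu> (inv h \<otimes> j) h
       = cis (2 * pi * shift n q \<nu> h)"
proof -
  define N where "N = {i. i < n \<and> \<nu> h i \<noteq> 0}"
  have "{..<n} = Fix n \<nu> h \<union> N" "Fix n \<nu> h \<inter> N = {}" "finite (Fix n \<nu> h)" "finite N"
    by (auto simp: N_def Fix_def)
  then have "det_rho n \<nu> (inv h \<otimes> j)
      = det_rho_fix n \<nu> (inv h \<otimes> j) h * (\<Prod>i\<in>N. eig \<nu> (inv h \<otimes> j) i)"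
    unfolding det_rho_def det_rho_fix_def by (simp add: prod.union_disjoint)
  moreover have "det_rho_fix n \<nu> (inv h \<otimes> j) h \<noteq> 0"
    by (simp add: det_rho_fix_def eig_def Fix_def)
  ultimately have "inverse (det_rho n \<nu> (inv h \<otimes> j)) * det_rho_fix n \<nu> (inv h \<otimes> j) h
      = inverse (\<Prod>i\<in>N. eig \<nu> (inv h \<otimes> j) i)"
    by (simp add: field_simps)
  also have "(\<Prod>i\<in>N. eig \<nu> (inv h \<otimes> j) i) = (\<Prod>i\<in>N. cis (- (2 * pi * (\<nu> h i - q i))))"
    using assms by (intro prod.cong) (auto simp: N_def eig_inv_mult_j algebra_simps)
  also have "\<dots> = cis (- (2 * pi * shift n q \<nu> h))"
    using \<open>finite N\<close> by (simp add: cis_sum[symmetric] shift_def N_def sum_distrib_left sum_negf)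
  finally show ?thesis by simp
qed

lemma eig_monomial_inv_mult:
  assumes "h \<in> carrier G" and "Poly_Mapping.keys \<alpha> \<subseteq> Fix n \<nu> h"
  shows "(\<Prod>i\<in>Poly_Mapping.keys \<alpha>. eig \<nu> (inv h \<otimes> j) i ^ Poly_Mapping.lookup \<alpha> i)
       = cis (2 * pi * mon_weight q \<alpha>)"
proof -
  have "eig \<nu> (inv h \<otimes> j) i ^ Poly_Mapping.lookup \<alpha> i
      = cis (2 * pi * (q i * real (Poly_Mapping.lookup \<alpha> i)))" if "i \<in> Poly_Mapping.keys \<alpha>" for i
    using that assms by (auto simp: Fix_def eig_inv_mult_j DeMoivre algebra_simps)
  then show ?thesis
    by (simp add: mon_weight_def sum_distrib_left cis_sum)
qed

lemma phi_inv_mult_eq_expQ: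
  assumes "h \<in> carrier G" and "vars_in (Fix n \<nu> h) a"
  shows "phi n \<nu> \<sigma> (inv h \<otimes> j) h a
       = cconst ((-1) ^ (\<sigma> (inv h \<otimes> j) * \<sigma> h)) * expQ n q \<nu> h a"
  unfolding phi_def act_mp_def expQ_def cconst_mult_sum_single
proof (intro sum.cong refl arg_cong[where f = "Poly_Mapping.single _"])
  fix \<alpha> assume "\<alpha> \<in> Poly_Mapping.keys a"
  then have "Poly_Mapping.keys \<alpha> \<subseteq> Fix n \<nu> h"
    using assms(2) by (simp add: vars_in_def)
  then show "(-1) ^ (\<sigma> (inv h \<otimes> j) * \<sigma> h) * inverse (det_rho n \<nu> (inv h \<otimes> j))
        * det_rho_fix n \<nu> (inv h \<otimes> j) h * (Poly_Mapping.lookup a \<alpha>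
        * (\<Prod>i\<in>Poly_Mapping.keys \<alpha>. eig \<nu> (inv h \<otimes> j) i ^ Poly_Mapping.lookup \<alpha> i))
      = (-1) ^ (\<sigma> (inv h \<otimes> j) * \<sigma> h) * (Poly_Mapping.lookup a \<alpha>
        * cis (2 * pi * (mon_weight q \<alpha> + shift n q \<nu> h)))"
    using det_rho_fix_div_det_rho[OF assms(1)] eig_monomial_inv_mult[OF assms(1)]
    by (simp add: distrib_left cis_mult[symmetric] mult_ac)
qed

end

lemma dual_phi_dual_unit:
  assumes "hom_Z2 G \<sigma>" and "j \<in> carrier G" and "h \<in> carrier G" and "Fix n \<nu> j = {}"
  shows "dual_phi G n \<nu> \<sigma> j h \<one> 1 = cconst ((-1) ^ (\<sigma> h * (\<sigma> j + 1)))"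
proof -
  have "Fix n \<nu> (\<one> \<otimes> inv j) = {}"
    using Fix_inv assms(2,4) by simp
  then have "dual_phi G n \<nu> \<sigma> j h \<one> 1 = cconst ((-1) ^ \<sigma> h * det_rho n \<nu> h
      * ((-1) ^ (\<sigma> h * \<sigma> j) * inverse (det_rho n \<nu> h)))"
    unfolding dual_phi_def phi_def chi_def det_rho_fix_def
    using hom_Z2_inv[OF assms(1,2)] assms(2) by (simp add: act_mp_def cconst_mult)
  also have "\<dots> = cconst ((-1) ^ (\<sigma> h * (\<sigma> j + 1)))"
    by (simp add: det_rho_def eig_def power_add field_simps)
  finally show ?thesis .
qed

end

theorem mainTheorem3:
  fixes G :: "'g monoid" and n :: nat and q :: "nat \<Rightarrow> real" and f :: mpoly
    and \<nu> :: "'g \<Rightarrow> nat \<Rightarrow> real" and \<sigma> :: "'g \<Rightarrow> nat" and j :: 'g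
  assumes weights: "\<forall>i<n. 0 < q i \<and> q i < 1"
    and qh: "quasi_homogeneous n q f"
    and isol: "isolated_singularity n f"
    and grp: "comm_group G" and fin: "finite (carrier G)"
    and rep: "diag_rep G n \<nu>"
    and inv_f: "\<forall>h\<in>carrier G. act_mp \<nu> h f = f"
    and sig: "hom_Z2 G \<sigma>"
    and jG: "j \<in> carrier G" and jq: "\<forall>i<n. \<nu> j i = q i"
  shows "(dual_unit_invariant G n f \<nu> \<sigma> j \<longleftrightarrow>
            (\<forall>h\<in>carrier G. (\<sigma> h * (\<sigma> j + 1)) mod 2 = 0))
       \<and> ((\<forall>h\<in>carrier G. (\<sigma> h * (\<sigma> j + 1)) mod 2 = 0) \<longleftrightarrow> G_Euler G n q f \<nu> \<sigma> j)"
proof -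
  (* Of the hypotheses on f only the absence of linear terms (from q_i < 1) is used. *)
  interpret comm_group G by (rule grp)
  interpret diagonal_rep G n \<nu> by unfold_locales (rule rep)
  have Fix_j: "Fix n \<nu> j = {}"
    using weights jq by (auto simp: Fix_def)
  have sign_eq_1: "(-1::complex) ^ k = 1 \<longleftrightarrow> k mod 2 = 0" for k
    by (simp add: minus_one_power_iff even_iff_mod_2_eq_zero)
  have "dual_unit_invariant G n f \<nu> \<sigma> j \<longleftrightarrow>
      (\<forall>h\<in>carrier G. (-1::complex) ^ (\<sigma> h * (\<sigma> j + 1)) = 1)"
    unfolding dual_unit_invariant_def l_one[OF inv_closed[OF jG]] Fix_inv[OF jG] Fix_j
      milnor_eq_empty_iff
    by (intro ball_cong) (simp_all add: dual_phi_dual_unit[OF sig jG _ Fix_j] cconst_eq_1_iff)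
  moreover have "G_Euler G n q f \<nu> \<sigma> j \<longleftrightarrow>
      (\<forall>h\<in>carrier G. (-1::complex) ^ (\<sigma> h * (\<sigma> j + 1)) = 1)"
    unfolding G_Euler_def
  proof (intro ball_cong refl)
    fix h assume "h \<in> carrier G"
    then show "(\<forall>a. vars_in (Fix n \<nu> h) a \<longrightarrow>
          milnor_eq (Fix n \<nu> h) f (phi n \<nu> \<sigma> (inv\<^bsub>G\<^esub> h \<otimes>\<^bsub>G\<^esub> j) h a) (expQ n q \<nu> h a))
        \<longleftrightarrow> (-1::complex) ^ (\<sigma> h * (\<sigma> j + 1)) = 1"
      using milnor_eq_scaled_expQ_iff[OF qh] weights
      by (simp add: phi_inv_mult_eq_expQ[OF jG jq] hom_Z2_sign_inv_mult[OF sig jG] cong: imp_cong)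
  qed
  ultimately show ?thesis
    unfolding sign_eq_1 by blast
qed

end
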